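(* There is a universal constant $c>0$ such that for every integer $k\ge 3$ and every $\varepsilon\in(0,1/10)$, \[ d(k,\varepsilon)\ \le\ \frac{\log(\lceil 1/\varepsilon\rceil+1)}{\log(\lceil 1/\varepsilon\rceil+1)-\log(1-1/k)}\ \le\ 1-\frac{c}{k\,|\log\varepsilon|}. \] Moreover, the first inequality holds with $d(k,\varepsilon)$ replaced by the Assouad dimension $\dim_A(E)$ of any bounded set $E\subset\mathbb{R}$ that $\varepsilon$-avoids $k$APs.
   Context: A $k$-term arithmetic progression ($k$AP) is a set $P=\{x, x+\lambda, \dots, x+(k-1)\lambda\}\subset\mathbb{R}$ with $\lambda>0$, called the gap length of $P$. Given $\varepsilon\in(0,1)$, a set $E\subset\mathbb{R}$ is said to $\varepsilon$-avoid $k$APs if for every $k$AP $P$ with gap length $\lambda$ one has $\sup_{p\in P}\inf_{x\in E}|x-p|\ \ge\ \varepsilon\lambda$. Define $d(k,\varepsilon)=\sup\{\dim_H(E): E\subset\mathbb{R} \text{ bounded and } E \ \varepsilon\text{-avoids } k\text{APs}\}$, where $\dim_H$ is Hausdorff dimension. For bounded $F$ and $r>0$ let $N_r(F)$ be the least number of open balls of radius at most $r$ covering $F$; the Assouad dimension of $E\subseteq\mathbb{R}$ is $\dim_A(E)=\inf\{\alpha\ge 0: \exists C>0 \text{ such that for all } 0<r<R,\ \sup_{x\in E}N_r(B(x,R)\cap E)\le C(R/r)^\alpha\}$. *)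

theory Defs
  imports "HOL-Analysis.Analysis" "HOL-Library.Extended_Real"
begin

text \<open>E epsilon-avoids kAPs: for every kAP P = {x, x+l, ..., x+(k-1)l} with l > 0,
  sup over p in P of inf over y in E of |y - p| is at least eps*l.
  (Written out: some point of P has distance at least eps*l from every point of E;
  with the convention inf over the empty set = +infinity.)\<close>
definition avoids_AP :: "nat \<Rightarrow> real \<Rightarrow> real set \<Rightarrow> bool" where
  "avoids_AP k eps E \<longleftrightarrow>
     (\<forall>x l. l > 0 \<longrightarrow> (\<exists>j<k. \<forall>y\<in>E. \<bar>y - (x + real j * l)\<bar> \<ge> eps * l))"

definition hausdorff_content :: "real \<Rightarrow> real \<Rightarrow> real set \<Rightarrow> ennreal" where
  "hausdorff_content s \<delta> E =
     (INF U\<in>{U :: nat \<Rightarrow> real set. E \<subseteq> (\<Union>i. U i) \<and> (\<forall>i. bounded (U i) \<and> diameter (U i) \<le> \<delta>)}.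
        (\<Sum>i. ennreal (diameter (U i) powr s)))"

definition hausdorff_measure :: "real \<Rightarrow> real set \<Rightarrow> ennreal" where
  "hausdorff_measure s E = (SUP \<delta>\<in>{0<..}. hausdorff_content s \<delta> E)"

definition hausdorff_dim :: "real set \<Rightarrow> ereal" where
  "hausdorff_dim E = Inf {ereal s | s. s \<ge> 0 \<and> hausdorff_measure s E = 0}"

definition d_AP :: "nat \<Rightarrow> real \<Rightarrow> ereal" where
  "d_AP k eps = (SUP E\<in>{E. bounded E \<and> avoids_AP k eps E}. hausdorff_dim E)"

definition covering_number :: "real \<Rightarrow> real set \<Rightarrow> nat" where
  "covering_number r F =
     (LEAST n. \<exists>c \<rho> :: nat \<Rightarrow> real. (\<forall>i<n. 0 < \<rho> i \<and> \<rho> i \<le> r) \<and> F \<subseteq> (\<Union>i<n. ball (c i) (\<rho> i)))"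

definition assouad_dim :: "real set \<Rightarrow> ereal" where
  "assouad_dim E = Inf {ereal \<alpha> | \<alpha>. \<alpha> \<ge> 0 \<and> (\<exists>C>0. \<forall>r R. 0 < r \<and> r < R \<longrightarrow>
        (\<forall>x\<in>E. real (covering_number r (ball x R \<inter> E)) \<le> C * (R / r) powr \<alpha>))}"

end

theory Submission
  imports Defs
begin

text \<open>Split an interval of length \<open>L\<close> into \<open>k\<close> blocks of \<open>m = \<lceil>1/\<epsilon>\<rceil>\<close> cells of length
  \<open>h = L/(k m)\<close>. For each offset \<open>i < m\<close>, the kAP of gap \<open>m h\<close> through the centres of the
  \<open>i\<close>-th cells of the blocks has a point at distance \<open>\<ge> \<epsilon> m h \<ge> h\<close> from \<open>E\<close>, so one of
  these cells misses \<open>E\<close>. Removing these \<open>m\<close> cells leaves at most \<open>N = m + 1\<close> runs of total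
  length \<open>(1 - 1/k) L\<close> covering \<open>E\<close> on the interval. Iterating this down to scale \<open>r\<close> and
  using concavity of \<open>x\<^sup>\<alpha>\<close>, \<open>E\<close> meets an interval of length \<open>R\<close> in a set covered by
  \<open>O((R/r)\<^sup>\<alpha>)\<close> intervals of length \<open>r\<close> whenever \<open>N\<^sup>1\<^sup>-\<^sup>\<alpha> (1 - 1/k)\<^sup>\<alpha> < 1\<close>, i.e. whenever
  \<open>\<alpha> > ln N / (ln N - ln (1 - 1/k))\<close>. This bounds the Assouad dimension and, for bounded
  \<open>E\<close>, the Hausdorff dimension; the bound \<open>1 - c/(k |ln \<epsilon>|)\<close> is elementary calculus.\<close>

section \<open>Covering an avoiding set by few short intervals\<close>

definition covered_by_intervals :: "nat \<Rightarrow> real \<Rightarrow> real set \<Rightarrow> bool" where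
  "covered_by_intervals N L F \<longleftrightarrow>
     (\<exists>(S::nat set) lo hi. finite S \<and> card S \<le> N \<and> (\<forall>s\<in>S. lo s \<le> hi s)
        \<and> F \<subseteq> (\<Union>s\<in>S. {lo s..hi s}) \<and> (\<Sum>s\<in>S. hi s - lo s) \<le> L)"

definition contracting_cover :: "nat \<Rightarrow> real \<Rightarrow> real set \<Rightarrow> bool" where
  "contracting_cover N \<theta> E \<longleftrightarrow>
     (\<forall>a b. a \<le> b \<longrightarrow> covered_by_intervals N (\<theta> * (b - a)) (E \<inter> {a..b}))"

text \<open>The cells \<open>{0..<n}\<close> not in \<open>F\<close> fall into maximal runs; a run starts at \<open>0\<close> or right
  after a cell of \<open>F\<close>, and ends (exclusively) at the next cell of \<open>F\<close> or at \<open>n\<close>.\<close>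

definition run_starts :: "nat set \<Rightarrow> nat set" where
  "run_starts F = insert 0 (Suc ` F)"

definition run_end :: "nat set \<Rightarrow> nat \<Rightarrow> nat \<Rightarrow> nat" where
  "run_end F n s = Min ({f\<in>F. s \<le> f} \<union> {n})"

lemma finite_run_starts: "finite F \<Longrightarrow> finite (run_starts F)"
  by (simp add: run_starts_def)

lemma card_run_starts_le:
  assumes "finite F"
  shows "card (run_starts F) \<le> card F + 1"
proof -
  have "card (run_starts F) \<le> card (Suc ` F) + 1"
    unfolding run_starts_def using assms by (simp add: card_insert_if)
  also have "card (Suc ` F) \<le> card F"
    using assms by (rule card_image_le)
  finally show ?thesis by simp
qed

lemma run_end_mem: "finite F \<Longrightarrow> run_end F n s \<in> {f\<in>F. s \<le> f} \<union> {n}"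
  unfolding run_end_def by (rule Min_in) auto

lemma run_end_le: "finite F \<Longrightarrow> run_end F n s \<le> n"
  unfolding run_end_def by (rule Min_le) auto

lemma run_end_le_blocked: "finite F \<Longrightarrow> f \<in> F \<Longrightarrow> s \<le> f \<Longrightarrow> run_end F n s \<le> f"
  unfolding run_end_def by (rule Min_le) auto

lemma run_start_le_end: "finite F \<Longrightarrow> s \<le> n \<Longrightarrow> s \<le> run_end F n s"
  using run_end_mem[of F n s] by auto

lemma run_starts_le: "F \<subseteq> {..<n} \<Longrightarrow> s \<in> run_starts F \<Longrightarrow> s \<le> n"
  unfolding run_starts_def by auto

lemma sum_run_lengths_le:
  assumes "finite F" "F \<subseteq> {..<n}"
  shows "(\<Sum>s\<in>run_starts F. run_end F n s - s) \<le> n - card F"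
proof -
  have disjoint: "{s..<run_end F n s} \<inter> {s'..<run_end F n s'} = {}"
    if "s \<in> run_starts F" "s' \<in> run_starts F" "s < s'" for s s'
  proof -
    from that obtain f' where "f' \<in> F" "s' = Suc f'" unfolding run_starts_def by auto
    then show ?thesis using run_end_le_blocked[OF assms(1), of f' s n] that by auto
  qed
  have "(\<Sum>s\<in>run_starts F. run_end F n s - s) = (\<Sum>s\<in>run_starts F. card {s..<run_end F n s})"
    by simp
  also have "\<dots> = card (\<Union>s\<in>run_starts F. {s..<run_end F n s})"
  proof (rule card_UN_disjoint[symmetric])
    show "\<forall>s\<in>run_starts F. \<forall>s'\<in>run_starts F. s \<noteq> s' \<longrightarrow>
        {s..<run_end F n s} \<inter> {s'..<run_end F n s'} = {}"
      using disjoint by (metis Int_commute linorder_neqE_nat)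
  qed (simp_all add: finite_run_starts assms(1))
  also have "\<dots> \<le> card ({..<n} - F)"
  proof (rule card_mono)
    show "(\<Union>s\<in>run_starts F. {s..<run_end F n s}) \<subseteq> {..<n} - F"
    proof
      fix x assume "x \<in> (\<Union>s\<in>run_starts F. {s..<run_end F n s})"
      then obtain s where "s \<le> x" "x < run_end F n s" by auto
      then show "x \<in> {..<n} - F"
        using run_end_le[OF assms(1), of n s] run_end_le_blocked[OF assms(1), of x s n] by auto
    qed
  qed simp
  also have "\<dots> = n - card F"
    using assms by (simp add: card_Diff_subset)
  finally show ?thesis .
qed

lemma ex_run_containing:
  assumes "finite F" "q < n" "q \<notin> F"
  shows "\<exists>s\<in>run_starts F. s \<le> q \<and> q < run_end F n s"
proof -
  define s where "s = Max {s\<in>run_starts F. s \<le> q}"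
  have fin: "finite {s\<in>run_starts F. s \<le> q}"
    using finite_run_starts[OF assms(1)] by simp
  have "0 \<in> {s\<in>run_starts F. s \<le> q}"
    by (simp add: run_starts_def)
  then have "s \<in> {s\<in>run_starts F. s \<le> q}"
    unfolding s_def by (intro Max_in fin) blast
  then have s: "s \<in> run_starts F" "s \<le> q" by simp_all
  have "q < run_end F n s"
  proof (rule ccontr)
    assume "\<not> q < run_end F n s"
    then have "run_end F n s \<in> F" "s \<le> run_end F n s"
      using run_end_mem[OF assms(1), of n s] assms(2) by auto
    moreover from this have "run_end F n s < q"
      using \<open>\<not> q < run_end F n s\<close> assms(3) by (metis le_neq_implies_less not_less)
    ultimately have "Suc (run_end F n s) \<le> s"
      unfolding s_def by (intro Max_ge fin) (auto simp: run_starts_def)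
    then show False using \<open>s \<le> run_end F n s\<close> by simp
  qed
  then show ?thesis using s by blast
qed

lemma ex_grid_cell:
  fixes a h y :: real
  assumes "h > 0" "n \<ge> 1" "a \<le> y" "y \<le> a + real n * h"
  shows "\<exists>q<n. a + real q * h \<le> y \<and> y \<le> a + real (q + 1) * h"
proof (cases "(y - a) / h < real n")
  case True
  define q where "q = nat \<lfloor>(y - a) / h\<rfloor>"
  have "0 \<le> (y - a) / h" using assms by simp
  then have "real q \<le> (y - a) / h" "(y - a) / h < real q + 1" "q < n"
    using True unfolding q_def by linarith+
  then show ?thesis using assms(1) by (intro exI[of _ q]) (auto simp: field_simps)
next
  case False
  then have "y = a + real n * h" using assms by (simp add: field_simps)
  then show ?thesis using assms by (intro exI[of _ "n - 1"]) (auto simp: of_nat_diff algebra_simps)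
qed

lemma covered_by_free_cells:
  fixes a h :: real and E :: "real set"
  assumes "h > 0" "n \<ge> 1" "finite F" "F \<subseteq> {..<n}"
    and free: "\<And>f y. f \<in> F \<Longrightarrow> y \<in> E \<Longrightarrow> \<not> (a + real f * h \<le> y \<and> y \<le> a + real (f + 1) * h)"
  shows "covered_by_intervals (card F + 1) (real (n - card F) * h) (E \<inter> {a..a + real n * h})"
proof -
  define lo where "lo s = a + real s * h" for s
  define hi where "hi s = a + real (run_end F n s) * h" for s
  have le: "s \<le> run_end F n s" if "s \<in> run_starts F" for s
    using run_start_le_end[OF assms(3) run_starts_le[OF assms(4) that]] .
  have cover: "E \<inter> {a..a + real n * h} \<subseteq> (\<Union>s\<in>run_starts F. {lo s..hi s})"
  proof
    fix y assume y: "y \<in> E \<inter> {a..a + real n * h}"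
    then obtain q where q: "q < n" "a + real q * h \<le> y" "y \<le> a + real (q + 1) * h"
      using ex_grid_cell[OF assms(1,2)] by auto
    then obtain s where "s \<in> run_starts F" "s \<le> q" "q < run_end F n s"
      using ex_run_containing[OF assms(3) q(1)] free y by blast
    moreover from this have "lo s \<le> a + real q * h" "a + real (q + 1) * h \<le> hi s"
      using assms(1) unfolding lo_def hi_def by (simp_all add: mult_right_mono del: of_nat_add)
    ultimately show "y \<in> (\<Union>s\<in>run_starts F. {lo s..hi s})"
      using q by (intro UN_I[of s]) auto
  qed
  have "(\<Sum>s\<in>run_starts F. hi s - lo s) = (\<Sum>s\<in>run_starts F. real (run_end F n s - s) * h)"
    by (rule sum.cong) (simp_all add: le hi_def lo_def of_nat_diff algebra_simps)
  also have "\<dots> = real (\<Sum>s\<in>run_starts F. run_end F n s - s) * h"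
    by (simp add: sum_distrib_right)
  also have "\<dots> \<le> real (n - card F) * h"
    using sum_run_lengths_le[OF assms(3,4)] assms(1)
    by (intro mult_right_mono) (simp_all only: of_nat_le_iff less_imp_le)
  finally have length: "(\<Sum>s\<in>run_starts F. hi s - lo s) \<le> real (n - card F) * h" .
  have "\<forall>s\<in>run_starts F. lo s \<le> hi s"
    using le assms(1) unfolding lo_def hi_def by (auto intro: mult_right_mono)
  then show ?thesis
    unfolding covered_by_intervals_def
    using finite_run_starts[OF assms(3)] card_run_starts_le[OF assms(3)] cover length
    by (intro exI[of _ "run_starts F"] exI[of _ lo] exI[of _ hi]) simp
qed

lemma avoids_AP_free_cells:
  fixes a h :: real
  assumes avoids: "avoids_AP k eps E" and "h > 0" and "eps * real m \<ge> 1"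
  shows "\<exists>F. F \<subseteq> {..<k * m} \<and> card F = m \<and>
           (\<forall>f\<in>F. \<forall>y\<in>E. \<not> (a + real f * h \<le> y \<and> y \<le> a + real (f + 1) * h))"
proof -
  let ?free = "\<lambda>f. \<forall>y\<in>E. \<not> (a + real f * h \<le> y \<and> y \<le> a + real (f + 1) * h)"
  have "m \<noteq> 0" using assms(3) by (intro notI) simp
  then have gap: "real m * h > 0" using assms(2) by simp
  have "\<exists>j<k. ?free (j * m + i)" for i
  proof -
    \<comment> \<open>the kAP of gap \<open>m h\<close> through the centre of cell \<open>i\<close> runs through the centres of cells \<open>j m + i\<close>\<close>
    obtain j where j: "j < k"
      and far: "\<forall>y\<in>E. \<bar>y - (a + (real i + 1/2) * h + real j * (real m * h))\<bar> \<ge> eps * (real m * h)"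
      using avoids[unfolded avoids_AP_def, rule_format, OF gap, of "a + (real i + 1/2) * h"] by blast
    have centre: "a + (real i + 1/2) * h + real j * (real m * h) = a + (real (j * m + i) + 1/2) * h"
      by (simp add: algebra_simps)
    have "h \<le> (eps * real m) * h"
      using assms(2,3) by simp
    then have h_le: "h \<le> eps * (real m * h)"
      by (simp add: mult.assoc)
    have "?free (j * m + i)"
    proof (intro ballI notI)
      fix y assume "y \<in> E" and cell: "a + real (j * m + i) * h \<le> y \<and> y \<le> a + real (j * m + i + 1) * h"
      then have "\<bar>y - (a + (real (j * m + i) + 1/2) * h)\<bar> \<le> h / 2"
        by (simp add: algebra_simps split: abs_split)
      moreover have "eps * (real m * h) \<le> \<bar>y - (a + (real (j * m + i) + 1/2) * h)\<bar>"
        using far \<open>y \<in> E\<close> unfolding centre by blast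
      ultimately show False
        using h_le assms(2) by linarith
    qed
    then show ?thesis using j by blast
  qed
  then have "\<forall>i. \<exists>j. j < k \<and> ?free (j * m + i)" by blast
  from choice[OF this] obtain g where g: "\<And>i. g i < k" "\<And>i. ?free (g i * m + i)"
    by blast
  define F where "F = (\<lambda>i. g i * m + i) ` {..<m}"
  have "inj_on (\<lambda>i. g i * m + i) {..<m}"
  proof
    fix x y assume "x \<in> {..<m}" "y \<in> {..<m}" "g x * m + x = g y * m + y"
    then have "(g x * m + x) mod m = (g y * m + y) mod m" by simp
    then show "x = y" using \<open>x \<in> {..<m}\<close> \<open>y \<in> {..<m}\<close> by simp
  qed
  then have "card F = m" unfolding F_def by (simp add: card_image)
  moreover have "F \<subseteq> {..<k * m}"
  proof
    fix f assume "f \<in> F"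
    then obtain i where i: "i < m" "f = g i * m + i" unfolding F_def by auto
    have "(g i + 1) * m \<le> k * m"
      using g(1)[of i] by (intro mult_right_mono) simp_all
    then show "f \<in> {..<k * m}" using i by (simp add: algebra_simps)
  qed
  ultimately show ?thesis
    using g(2) unfolding F_def by blast
qed

lemma avoids_AP_contracting_cover:
  assumes avoids: "avoids_AP k eps E" and "k \<ge> 1" "eps > 0"
  shows "contracting_cover (nat \<lceil>1/eps\<rceil> + 1) (1 - 1 / real k) E"
  unfolding contracting_cover_def
proof (intro allI impI)
  fix a b :: real assume "a \<le> b"
  define m where "m = nat \<lceil>1/eps\<rceil>"
  show "covered_by_intervals (m + 1) ((1 - 1 / real k) * (b - a)) (E \<inter> {a..b})"
  proof (cases "a = b")
    case True
    then show ?thesis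
      unfolding covered_by_intervals_def
      by (intro exI[of _ "{0}"] exI[of _ "\<lambda>_. a"]) auto
  next
    case False
    have "1/eps \<le> real m" unfolding m_def by linarith
    then have em: "eps * real m \<ge> 1" using assms(3) by (simp add: field_simps)
    then have "m \<ge> 1"
      using assms(3) by (metis less_one mult_zero_right not_le of_nat_0 not_one_le_zero)
    define h where "h = (b - a) / (real k * real m)"
    have "h > 0"
      using False \<open>a \<le> b\<close> \<open>m \<ge> 1\<close> assms(2) unfolding h_def by simp
    obtain F where F: "F \<subseteq> {..<k * m}" "card F = m"
      "\<And>f y. f \<in> F \<Longrightarrow> y \<in> E \<Longrightarrow> \<not> (a + real f * h \<le> y \<and> y \<le> a + real (f + 1) * h)"
      using avoids_AP_free_cells[OF avoids \<open>h > 0\<close> em, of a] by blast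
    have "finite F" using F(1) finite_subset by blast
    have "k * m \<ge> 1" using \<open>m \<ge> 1\<close> assms(2) by simp
    have "covered_by_intervals (card F + 1) (real (k * m - card F) * h) (E \<inter> {a..a + real (k * m) * h})"
      using covered_by_free_cells[OF \<open>h > 0\<close> \<open>k * m \<ge> 1\<close> \<open>finite F\<close> F(1) F(3)] .
    moreover have "a + real (k * m) * h = b"
      using \<open>m \<ge> 1\<close> assms(2) unfolding h_def by simp
    moreover have "real (k * m - card F) * h = (1 - 1 / real k) * (b - a)"
      using \<open>m \<ge> 1\<close> assms(2) F(2) unfolding h_def by (simp add: of_nat_diff field_simps)
    ultimately show ?thesis using F(2) by simp
  qed
qed

section \<open>Iterating a contracting cover\<close>

lemma powr_le_tangent:
  fixes x c \<alpha> :: real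
  assumes "0 < \<alpha>" "\<alpha> < 1" "c > 0" "x \<ge> 0"
  shows "x powr \<alpha> \<le> (1 - \<alpha>) * c powr \<alpha> + \<alpha> * c powr (\<alpha> - 1) * x"
proof (cases "x = 0")
  case True
  then show ?thesis using assms by simp
next
  case False
  then have "x powr \<alpha> * c powr (1 - \<alpha>) \<le> \<alpha> * x + (1 - \<alpha>) * c"
    using Youngs_inequality_0[of \<alpha> "1 - \<alpha>" x c] assms by simp
  then have "x powr \<alpha> * c powr (1 - \<alpha>) * c powr (\<alpha> - 1) \<le> (\<alpha> * x + (1 - \<alpha>) * c) * c powr (\<alpha> - 1)"
    by (intro mult_right_mono) auto
  moreover have "c powr (1 - \<alpha>) * c powr (\<alpha> - 1) = 1"
    using assms by (simp flip: powr_add)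
  moreover have "c * c powr (\<alpha> - 1) = c powr \<alpha>"
    using assms by (simp add: powr_diff)
  ultimately show ?thesis by (simp add: algebra_simps)
qed

lemma sum_powr_le_card_powr:
  fixes l :: "'a \<Rightarrow> real"
  assumes "finite S" "card S \<le> N" "N \<ge> 1" "\<And>s. s \<in> S \<Longrightarrow> l s \<ge> 0"
    "(\<Sum>s\<in>S. l s) \<le> T" "T > 0" "0 < \<alpha>" "\<alpha> < 1"
  shows "(\<Sum>s\<in>S. l s powr \<alpha>) \<le> real N powr (1 - \<alpha>) * T powr \<alpha>"
proof -
  define c where "c = T / real N"
  have c: "c > 0" using assms by (simp add: c_def)
  have "(\<Sum>s\<in>S. l s powr \<alpha>) \<le> (\<Sum>s\<in>S. (1 - \<alpha>) * c powr \<alpha> + \<alpha> * c powr (\<alpha> - 1) * l s)"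
    by (intro sum_mono powr_le_tangent) (use assms c in auto)
  also have "\<dots> = real (card S) * ((1 - \<alpha>) * c powr \<alpha>) + \<alpha> * c powr (\<alpha> - 1) * (\<Sum>s\<in>S. l s)"
    by (simp add: sum.distrib sum_distrib_left)
  also have "\<dots> \<le> real N * ((1 - \<alpha>) * c powr \<alpha>) + \<alpha> * c powr (\<alpha> - 1) * T"
    using assms c by (intro add_mono mult_right_mono mult_left_mono) auto
  also have "\<alpha> * c powr (\<alpha> - 1) * T = \<alpha> * real N * (c * c powr (\<alpha> - 1))"
    using assms by (simp add: c_def)
  also have "c * c powr (\<alpha> - 1) = c powr \<alpha>"
    using c by (simp add: powr_diff)
  also have "real N * ((1 - \<alpha>) * c powr \<alpha>) + \<alpha> * real N * c powr \<alpha> = real N * c powr \<alpha>"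
    by (simp add: algebra_simps)
  also have "real N * c powr \<alpha> = real N powr (1 - \<alpha>) * T powr \<alpha>"
    using assms by (simp add: c_def powr_divide powr_diff)
  finally show ?thesis .
qed

definition covered_by_cballs :: "real \<Rightarrow> real \<Rightarrow> real set \<Rightarrow> bool" where
  "covered_by_cballs r B F \<longleftrightarrow> (\<exists>P. finite P \<and> real (card P) \<le> B \<and> F \<subseteq> (\<Union>c\<in>P. cball c (r / 2)))"

lemma covered_by_cballs_mono:
  "covered_by_cballs r B F \<Longrightarrow> B \<le> B' \<Longrightarrow> F' \<subseteq> F \<Longrightarrow> covered_by_cballs r B' F'"
  unfolding covered_by_cballs_def by (meson order_trans)

lemma covered_by_cballs_UN:
  assumes "finite S" "\<And>s. s \<in> S \<Longrightarrow> covered_by_cballs r (B s) (F s)"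
  shows "covered_by_cballs r (\<Sum>s\<in>S. B s) (\<Union>s\<in>S. F s)"
proof -
  obtain P where P: "\<And>s. s \<in> S \<Longrightarrow> finite (P s) \<and> real (card (P s)) \<le> B s
      \<and> F s \<subseteq> (\<Union>c\<in>P s. cball c (r / 2))"
    using assms(2) unfolding covered_by_cballs_def by metis
  have "real (card (\<Union>s\<in>S. P s)) \<le> (\<Sum>s\<in>S. real (card (P s)))"
    using card_UN_le[OF assms(1), of P] by (simp flip: of_nat_sum)
  also have "\<dots> \<le> (\<Sum>s\<in>S. B s)"
    using P by (intro sum_mono) blast
  finally show ?thesis
    unfolding covered_by_cballs_def using assms(1) P
    by (intro exI[of _ "\<Union>s\<in>S. P s"]) blast
qed

lemma covered_by_cballs_interval:
  fixes a b r :: real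
  assumes "r > 0" "a \<le> b"
  shows "covered_by_cballs r ((b - a) / r + 1) {a..b}"
proof -
  define n where "n = nat \<lfloor>(b - a) / r\<rfloor> + 1"
  have "0 \<le> (b - a) / r"
    using assms by simp
  then have "(b - a) / r \<le> real n"
    unfolding n_def by linarith
  then have "b \<le> a + real n * r"
    using assms(1) by (simp add: field_simps)
  have "{a..b} \<subseteq> (\<Union>q<n. cball (a + (real q + 1/2) * r) (r / 2))"
  proof
    fix y assume "y \<in> {a..b}"
    moreover have "n \<ge> 1" unfolding n_def by simp
    ultimately obtain q where "q < n" "a + real q * r \<le> y" "y \<le> a + real (q + 1) * r"
      using ex_grid_cell[OF assms(1), of n a y] \<open>b \<le> a + real n * r\<close> by auto
    then show "y \<in> (\<Union>q<n. cball (a + (real q + 1/2) * r) (r / 2))"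
      by (intro UN_I[of q]) (auto simp: cball_eq_atLeastAtMost algebra_simps)
  qed
  moreover have "real (card ((\<lambda>q. a + (real q + 1/2) * r) ` {..<n})) \<le> (b - a) / r + 1"
  proof -
    have "card ((\<lambda>q. a + (real q + 1/2) * r) ` {..<n}) \<le> n"
      using card_image_le[of "{..<n}"] by simp
    moreover have "real n \<le> (b - a) / r + 1"
      using assms unfolding n_def by simp
    ultimately show ?thesis by linarith
  qed
  ultimately show ?thesis
    unfolding covered_by_cballs_def by (intro exI[of _ "(\<lambda>q. a + (real q + 1/2) * r) ` {..<n}"]) auto
qed

lemma sum_max_powr_le:
  assumes "finite S" "card S \<le> N" "N \<ge> 1" "\<forall>s\<in>S. lo s \<le> hi s"
    "(\<Sum>s\<in>S. hi s - lo s) \<le> T" "T > 0" "0 < \<alpha>" "\<alpha> < 1" "r > 0"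
  shows "(\<Sum>s\<in>S. max 1 ((hi s - lo s) / r) powr \<alpha>) \<le> real N + real N powr (1 - \<alpha>) * (T / r) powr \<alpha>"
proof -
  have "(\<Sum>s\<in>S. max 1 ((hi s - lo s) / r) powr \<alpha>) \<le> (\<Sum>s\<in>S. 1 + ((hi s - lo s) / r) powr \<alpha>)"
    by (intro sum_mono) (auto simp: max_def)
  also have "\<dots> = real (card S) + (\<Sum>s\<in>S. ((hi s - lo s) / r) powr \<alpha>)"
    by (simp add: sum.distrib)
  also have "(\<Sum>s\<in>S. ((hi s - lo s) / r) powr \<alpha>) \<le> real N powr (1 - \<alpha>) * (T / r) powr \<alpha>"
  proof (rule sum_powr_le_card_powr)
    show "(\<Sum>s\<in>S. (hi s - lo s) / r) \<le> T / r"
      using assms(5,9) by (simp add: divide_right_mono flip: sum_divide_distrib)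
  qed (use assms in auto)
  finally show ?thesis using assms(2) by simp
qed

lemma contracting_cover_step:
  fixes a b r C :: real
  assumes cover: "contracting_cover N \<theta> E"
    and "N \<ge> 1" "0 < \<theta>" "0 < \<alpha>" "\<alpha> < 1" "r > 0" "C \<ge> 0" "a < b"
    and pieces: "\<And>a' b'. a' \<le> b' \<Longrightarrow> b' - a' \<le> \<theta> * (b - a) \<Longrightarrow>
       covered_by_cballs r (C * max 1 ((b' - a') / r) powr \<alpha>) (E \<inter> {a'..b'})"
  shows "covered_by_cballs r
     (C * (real N + real N powr (1 - \<alpha>) * \<theta> powr \<alpha> * ((b - a) / r) powr \<alpha>)) (E \<inter> {a..b})"
proof -
  have "covered_by_intervals N (\<theta> * (b - a)) (E \<inter> {a..b})"
    using cover \<open>a < b\<close> unfolding contracting_cover_def by simp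
  then obtain S lo hi where S: "finite (S :: nat set)" "card S \<le> N" "\<forall>s\<in>S. lo s \<le> hi s"
    "E \<inter> {a..b} \<subseteq> (\<Union>s\<in>S. {lo s..hi s})" "(\<Sum>s\<in>S. hi s - lo s) \<le> \<theta> * (b - a)"
    unfolding covered_by_intervals_def by blast
  have "hi s - lo s \<le> (\<Sum>s\<in>S. hi s - lo s)" if "s \<in> S" for s
    by (rule member_le_sum) (use S that in auto)
  then have "hi s - lo s \<le> \<theta> * (b - a)" if "s \<in> S" for s
    using S(5) that by (meson order_trans)
  then have "covered_by_cballs r (\<Sum>s\<in>S. C * max 1 ((hi s - lo s) / r) powr \<alpha>) (\<Union>s\<in>S. E \<inter> {lo s..hi s})"
    using S(3) by (intro covered_by_cballs_UN S(1) pieces) auto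
  moreover have "(\<Sum>s\<in>S. C * max 1 ((hi s - lo s) / r) powr \<alpha>)
      \<le> C * (real N + real N powr (1 - \<alpha>) * (\<theta> * (b - a) / r) powr \<alpha>)"
    unfolding sum_distrib_left[symmetric] using assms
    by (intro mult_left_mono sum_max_powr_le S) auto
  moreover have "(\<theta> * (b - a) / r) powr \<alpha> = \<theta> powr \<alpha> * ((b - a) / r) powr \<alpha>"
    using assms by (simp add: powr_mult flip: times_divide_eq_right)
  ultimately show ?thesis
    using S(4) by (elim covered_by_cballs_mono) (auto simp: mult.assoc)
qed

lemma contracting_cover_covered_by_cballs:
  assumes cover: "contracting_cover N \<theta> E"
    and "N \<ge> 1" "0 < \<theta>" "\<theta> < 1" "0 < \<alpha>" "\<alpha> < 1"
    and rate: "real N powr (1 - \<alpha>) * \<theta> powr \<alpha> < 1"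
  shows "\<exists>C>0. \<forall>r>0. \<forall>a b. a \<le> b \<longrightarrow>
           covered_by_cballs r (C * max 1 ((b - a) / r) powr \<alpha>) (E \<inter> {a..b})"
proof -
  define \<rho> where "\<rho> = real N powr (1 - \<alpha>) * \<theta> powr \<alpha>"
  define M where "M = max 1 ((real N / (1 - \<rho>)) powr (1 / \<alpha>))"
  define C where "C = M + 1"
  have "M \<ge> 1" "C > 0" unfolding C_def M_def by auto
  \<comment> \<open>beyond scale \<open>M\<close> the recursion \<open>C x\<^sup>\<alpha> \<ge> C (N + \<rho> x\<^sup>\<alpha>)\<close> closes up\<close>
  have absorb: "real N + \<rho> * x powr \<alpha> \<le> x powr \<alpha>" if "M \<le> x" for x
  proof -
    have "real N / (1 - \<rho>) = ((real N / (1 - \<rho>)) powr (1 / \<alpha>)) powr \<alpha>"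
      using assms(2,5) rate by (simp add: \<rho>_def powr_powr)
    also have "\<dots> \<le> x powr \<alpha>"
      using that assms(5) unfolding M_def by (intro powr_mono2) auto
    finally show ?thesis using rate by (simp add: \<rho>_def field_simps)
  qed
  have small: "covered_by_cballs r (C * max 1 ((b - a) / r) powr \<alpha>) (E \<inter> {a..b})"
    if "r > 0" "a \<le> b" "b - a \<le> M * r" for r a b
  proof (rule covered_by_cballs_mono[OF covered_by_cballs_interval[OF that(1,2)]])
    have "(b - a) / r + 1 \<le> C"
      using that unfolding C_def by (simp add: field_simps)
    also have "C \<le> C * max 1 ((b - a) / r) powr \<alpha>"
      using \<open>C > 0\<close> assms(5) by (simp add: ge_one_powr_ge_zero)
    finally show "(b - a) / r + 1 \<le> C * max 1 ((b - a) / r) powr \<alpha>" .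
  qed auto
  have scaled: "covered_by_cballs r (C * max 1 ((b - a) / r) powr \<alpha>) (E \<inter> {a..b})"
    if "r > 0" "a \<le> b" "b - a \<le> M * r * (1 / \<theta>) ^ n" for r a b n
    using that(2,3)
  proof (induction n arbitrary: a b)
    case 0
    then show ?case using small \<open>r > 0\<close> by simp
  next
    case (Suc n)
    show ?case
    proof (cases "b - a \<le> M * r")
      case True
      then show ?thesis using small \<open>r > 0\<close> Suc.prems by blast
    next
      case False
      have "r \<le> M * r" using \<open>M \<ge> 1\<close> \<open>r > 0\<close> by simp
      with False \<open>r > 0\<close> have "a < b" by linarith
      have "M \<le> (b - a) / r" using False \<open>r > 0\<close> by (simp add: field_simps)
      have "covered_by_cballs r
          (C * (real N + \<rho> * ((b - a) / r) powr \<alpha>)) (E \<inter> {a..b})"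
      proof (unfold \<rho>_def mult.assoc[symmetric], rule contracting_cover_step[OF cover])
        fix a' b' :: real assume "a' \<le> b'" "b' - a' \<le> \<theta> * (b - a)"
        moreover have "\<theta> * (b - a) \<le> M * r * (1 / \<theta>) ^ n"
          using Suc.prems(2) assms(3) by (simp add: field_simps)
        ultimately show "covered_by_cballs r (C * max 1 ((b' - a') / r) powr \<alpha>) (E \<inter> {a'..b'})"
          using Suc.IH by simp
      qed (use assms \<open>r > 0\<close> \<open>C > 0\<close> \<open>a < b\<close> in auto)
      moreover have "C * (real N + \<rho> * ((b - a) / r) powr \<alpha>) \<le> C * max 1 ((b - a) / r) powr \<alpha>"
        using absorb[OF \<open>M \<le> (b - a) / r\<close>] \<open>M \<ge> 1\<close> \<open>M \<le> (b - a) / r\<close> \<open>C > 0\<close> by simp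
      ultimately show ?thesis by (rule covered_by_cballs_mono) simp
    qed
  qed
  have "covered_by_cballs r (C * max 1 ((b - a) / r) powr \<alpha>) (E \<inter> {a..b})"
    if "r > 0" "a \<le> b" for r a b
  proof -
    have "1 < 1 / \<theta>" using assms(3,4) by simp
    then obtain n where "(b - a) / (M * r) < (1 / \<theta>) ^ n"
      using real_arch_pow by blast
    then have "b - a \<le> M * r * (1 / \<theta>) ^ n"
      using \<open>M \<ge> 1\<close> that(1) by (simp add: field_simps)
    then show ?thesis using scaled that by blast
  qed
  then show ?thesis using \<open>C > 0\<close> by blast
qed

section \<open>Dimension bounds\<close>

text \<open>The exponent \<open>s\<close> solving \<open>N\<^sup>1\<^sup>-\<^sup>s \<theta>\<^sup>s = 1\<close>.\<close>

definition contraction_exponent :: "nat \<Rightarrow> real \<Rightarrow> real" where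
  "contraction_exponent N \<theta> = ln (real N) / (ln (real N) - ln \<theta>)"

lemma contraction_exponent_bounds:
  assumes "N \<ge> 1" "0 < \<theta>" "\<theta> < 1"
  shows "0 \<le> contraction_exponent N \<theta>" "contraction_exponent N \<theta> < 1"
proof -
  have "ln \<theta> < 0" "0 \<le> ln (real N)" using assms by simp_all
  then show "0 \<le> contraction_exponent N \<theta>" "contraction_exponent N \<theta> < 1"
    unfolding contraction_exponent_def by (simp_all add: divide_less_eq)
qed

lemma contraction_rate_less_one:
  assumes "N \<ge> 1" "0 < \<theta>" "\<theta> < 1" "contraction_exponent N \<theta> < \<alpha>"
  shows "real N powr (1 - \<alpha>) * \<theta> powr \<alpha> < 1"
proof -
  have "ln \<theta> < 0" "0 \<le> ln (real N)" using assms by simp_all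
  then have "(1 - \<alpha>) * ln (real N) + \<alpha> * ln \<theta> < 0"
    using assms(4) unfolding contraction_exponent_def by (simp add: divide_less_eq algebra_simps)
  moreover have "real N powr (1 - \<alpha>) * \<theta> powr \<alpha> = exp ((1 - \<alpha>) * ln (real N) + \<alpha> * ln \<theta>)"
    using assms by (simp add: powr_def exp_add)
  ultimately show ?thesis by simp
qed

lemma finite_UN_enumerate:
  assumes "finite P"
  obtains f :: "nat \<Rightarrow> 'a" where "(\<Union>c\<in>P. A c) = (\<Union>i<card P. A (f i))"
proof -
  obtain f where "bij_betw f {..<card P} P"
    using assms ex_bij_betw_nat_finite lessThan_atLeast0 by metis
  then have "P = f ` {..<card P}"
    by (simp add: bij_betw_def)
  moreover have "(\<Union>c\<in>f ` {..<card P}. A c) = (\<Union>i<card P. A (f i))"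
    by (simp add: SUP_image comp_def)
  ultimately show ?thesis
    by (intro that) simp
qed

lemma covering_number_le_card:
  assumes "finite P" "r > 0" "F \<subseteq> (\<Union>c\<in>P. cball c (r / 2))"
  shows "covering_number r F \<le> card P"
proof -
  obtain f where f: "(\<Union>c\<in>P. cball c (r / 2)) = (\<Union>i<card P. cball (f i) (r / 2))"
    using finite_UN_enumerate[OF assms(1)] by blast
  have "cball c (r / 2) \<subseteq> ball c r" for c :: real
    using assms(2) by auto
  then have "F \<subseteq> (\<Union>i<card P. ball (f i) r)"
    using assms(3) unfolding f by blast
  then show ?thesis
    unfolding covering_number_def using assms(2)
    by (intro Least_le exI[of _ f] exI[of _ "\<lambda>_. r"]) auto
qed

lemma assouad_dim_le_of_covered_by_cballs:
  assumes "\<alpha> \<ge> 0" "C > 0"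
    and cov: "\<And>r a b. r > 0 \<Longrightarrow> a \<le> b \<Longrightarrow> covered_by_cballs r (C * max 1 ((b - a) / r) powr \<alpha>) (E \<inter> {a..b})"
  shows "assouad_dim E \<le> ereal \<alpha>"
proof -
  have "real (covering_number r (ball x R \<inter> E)) \<le> C * 2 powr \<alpha> * (R / r) powr \<alpha>"
    if "0 < r" "r < R" for r R x
  proof -
    have "covered_by_cballs r (C * max 1 (((x + R) - (x - R)) / r) powr \<alpha>) (E \<inter> {x - R..x + R})"
      by (intro cov) (use that in auto)
    then obtain P where P: "finite P" "real (card P) \<le> C * max 1 (((x + R) - (x - R)) / r) powr \<alpha>"
      "E \<inter> {x - R..x + R} \<subseteq> (\<Union>c\<in>P. cball c (r / 2))"
      unfolding covered_by_cballs_def by blast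
    have "ball x R \<inter> E \<subseteq> E \<inter> {x - R..x + R}"
      by (auto simp: ball_eq_greaterThanLessThan)
    then have "real (covering_number r (ball x R \<inter> E)) \<le> real (card P)"
      using covering_number_le_card[OF P(1) that(1)] P(3) by (meson order_trans of_nat_le_iff)
    also have "\<dots> \<le> C * (2 * (R / r)) powr \<alpha>"
      using P(2) that by (simp add: field_simps)
    also have "\<dots> = C * 2 powr \<alpha> * (R / r) powr \<alpha>"
      using that powr_mult[of 2 "R / r" \<alpha>] by simp
    finally show ?thesis .
  qed
  then have "\<exists>C'>0. \<forall>r R. 0 < r \<and> r < R \<longrightarrow>
      (\<forall>x\<in>E. real (covering_number r (ball x R \<inter> E)) \<le> C' * (R / r) powr \<alpha>)"
    using \<open>C > 0\<close> by (intro exI[of _ "C * 2 powr \<alpha>"]) auto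
  then show ?thesis
    unfolding assouad_dim_def using assms(1) by (intro Inf_lower) blast
qed

lemma hausdorff_content_le_covered_by_cballs:
  assumes "covered_by_cballs r B F" "0 < r" "r \<le> \<delta>"
  shows "hausdorff_content s \<delta> F \<le> ennreal (B * r powr s)"
proof -
  obtain P where P: "finite P" "real (card P) \<le> B" "F \<subseteq> (\<Union>c\<in>P. cball c (r / 2))"
    using assms(1) unfolding covered_by_cballs_def by blast
  obtain f where f: "(\<Union>c\<in>P. cball c (r / 2)) = (\<Union>i<card P. cball (f i) (r / 2))"
    using finite_UN_enumerate[OF P(1)] by blast
  define U where "U i = (if i < card P then cball (f i) (r / 2) else {})" for i
  have diam: "diameter (U i) = (if i < card P then r else 0)" for i
    unfolding U_def using assms(2) by simp
  have "F \<subseteq> (\<Union>i. U i)"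
  proof
    fix y assume "y \<in> F"
    then obtain i where "i < card P" "y \<in> cball (f i) (r / 2)"
      using P(3) unfolding f by blast
    then show "y \<in> (\<Union>i. U i)"
      unfolding U_def by (intro UN_I[of i]) auto
  qed
  moreover have "\<forall>i. bounded (U i) \<and> diameter (U i) \<le> \<delta>"
    using diam assms(2,3) unfolding U_def by simp
  ultimately have "hausdorff_content s \<delta> F \<le> (\<Sum>i. ennreal (diameter (U i) powr s))"
    unfolding hausdorff_content_def by (intro INF_lower) blast
  also have "\<dots> = (\<Sum>i<card P. ennreal (r powr s))"
    by (subst suminf_finite[of "{..<card P}"]) (auto simp: diam)
  also have "\<dots> = ennreal (real (card P) * r powr s)"
    using sum_ennreal[of "{..<card P}" "\<lambda>_. r powr s"] by simp
  also have "\<dots> \<le> ennreal (B * r powr s)"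
    using P(2) by (intro ennreal_leI mult_right_mono) simp_all
  finally show ?thesis .
qed

lemma hausdorff_measure_eq_0_of_covered_by_cballs:
  assumes "bounded E" "\<alpha> < \<beta>" "C > 0"
    and cov: "\<And>r a b. r > 0 \<Longrightarrow> a \<le> b \<Longrightarrow> covered_by_cballs r (C * max 1 ((b - a) / r) powr \<alpha>) (E \<inter> {a..b})"
  shows "hausdorff_measure \<beta> E = 0"
proof -
  obtain M where M: "\<forall>x\<in>E. \<bar>x\<bar> \<le> M"
    using assms(1) unfolding bounded_real by blast
  define a where "a = - \<bar>M\<bar> - 1"
  define b where "b = \<bar>M\<bar> + 1"
  have "E \<subseteq> {a..b}" "a < b"
    using M unfolding a_def b_def by (force simp: abs_le_iff)+
  define L where "L = b - a"
  have "L > 0" using \<open>a < b\<close> by (simp add: L_def)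
  have small: "hausdorff_content \<beta> \<delta> E \<le> ennreal \<eta>" if "\<delta> > 0" "\<eta> > 0" for \<delta> \<eta>
  proof -
    \<comment> \<open>at scale \<open>r \<le> L\<close> the cover costs \<open>C (L/r)\<^sup>\<alpha> r\<^sup>\<beta> = C L\<^sup>\<alpha> r\<^sup>\<beta>\<^sup>-\<^sup>\<alpha>\<close>, which is small with \<open>r\<close>\<close>
    define K where "K = C * L powr \<alpha>"
    have "K > 0" using \<open>C > 0\<close> \<open>L > 0\<close> by (simp add: K_def)
    define r where "r = min \<delta> (min L ((\<eta> / K) powr (1 / (\<beta> - \<alpha>))))"
    have r: "0 < r" "r \<le> \<delta>" "r \<le> L" "r \<le> (\<eta> / K) powr (1 / (\<beta> - \<alpha>))"
      using that \<open>L > 0\<close> \<open>K > 0\<close> unfolding r_def by auto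
    have "E \<subseteq> E \<inter> {a..b}" using \<open>E \<subseteq> {a..b}\<close> by blast
    with cov[OF r(1) less_imp_le[OF \<open>a < b\<close>]]
    have "covered_by_cballs r (C * (L / r) powr \<alpha>) E"
      using r by (elim covered_by_cballs_mono) (auto simp: L_def)
    then have content: "hausdorff_content \<beta> \<delta> E \<le> ennreal (C * (L / r) powr \<alpha> * r powr \<beta>)"
      using r by (intro hausdorff_content_le_covered_by_cballs)
    have "C * (L / r) powr \<alpha> * r powr \<beta> = K * r powr (\<beta> - \<alpha>)"
      using r(1) \<open>L > 0\<close> by (simp add: K_def powr_divide powr_diff)
    also have "\<dots> \<le> K * ((\<eta> / K) powr (1 / (\<beta> - \<alpha>))) powr (\<beta> - \<alpha>)"
      using r \<open>K > 0\<close> assms(2) by (intro mult_left_mono powr_mono2) auto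
    also have "\<dots> = \<eta>"
      using \<open>K > 0\<close> \<open>\<eta> > 0\<close> assms(2) by (simp add: powr_powr)
    finally have "ennreal (C * (L / r) powr \<alpha> * r powr \<beta>) \<le> ennreal \<eta>"
      by (rule ennreal_leI)
    with content show ?thesis
      by (rule order_trans)
  qed
  have "hausdorff_content \<beta> \<delta> E = 0" if "\<delta> > 0" for \<delta>
  proof -
    have "hausdorff_content \<beta> \<delta> E \<le> 0"
      by (rule ennreal_le_epsilon) (use small[OF that] in simp)
    then show ?thesis by simp
  qed
  then show ?thesis
    unfolding hausdorff_measure_def by simp
qed

lemma ereal_le_of_dense:
  fixes y :: ereal and A B :: real
  assumes "A < B" "\<And>\<alpha>. A < \<alpha> \<Longrightarrow> \<alpha> < B \<Longrightarrow> y \<le> ereal \<alpha>"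
  shows "y \<le> ereal A"
proof (rule dense_ge_bounded[of "ereal A" "ereal B"])
  show "ereal A < ereal B" using assms(1) by simp
  fix w assume w: "ereal A < w" "w < ereal B"
  then obtain \<alpha> where "w = ereal \<alpha>" by (cases w) auto
  then show "y \<le> w" using w assms(2) by auto
qed

theorem assouad_dim_le_contraction_exponent:
  assumes "contracting_cover N \<theta> E" "N \<ge> 1" "0 < \<theta>" "\<theta> < 1"
  shows "assouad_dim E \<le> ereal (contraction_exponent N \<theta>)"
proof (rule ereal_le_of_dense)
  note bounds = contraction_exponent_bounds[OF assms(2-4)]
  show "contraction_exponent N \<theta> < 1" by (rule bounds(2))
  fix \<alpha> assume \<alpha>: "contraction_exponent N \<theta> < \<alpha>" "\<alpha> < 1"
  then have "0 < \<alpha>" using bounds(1) by linarith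
  then obtain C where "C > 0"
    "\<forall>r>0. \<forall>a b. a \<le> b \<longrightarrow> covered_by_cballs r (C * max 1 ((b - a) / r) powr \<alpha>) (E \<inter> {a..b})"
    using contracting_cover_covered_by_cballs[OF assms \<open>0 < \<alpha>\<close> \<alpha>(2) contraction_rate_less_one[OF assms(2-4) \<alpha>(1)]]
    by blast
  then show "assouad_dim E \<le> ereal \<alpha>"
    using \<open>0 < \<alpha>\<close> by (intro assouad_dim_le_of_covered_by_cballs) auto
qed

theorem hausdorff_dim_le_contraction_exponent:
  assumes "contracting_cover N \<theta> E" "N \<ge> 1" "0 < \<theta>" "\<theta> < 1" "bounded E"
  shows "hausdorff_dim E \<le> ereal (contraction_exponent N \<theta>)"
proof (rule ereal_le_of_dense)
  note bounds = contraction_exponent_bounds[OF assms(2-4)]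
  show "contraction_exponent N \<theta> < 1" by (rule bounds(2))
  fix \<beta> assume \<beta>: "contraction_exponent N \<theta> < \<beta>" "\<beta> < 1"
  define \<alpha> where "\<alpha> = (contraction_exponent N \<theta> + \<beta>) / 2"
  have \<alpha>: "contraction_exponent N \<theta> < \<alpha>" "\<alpha> < \<beta>" "0 < \<alpha>" "\<alpha> < 1"
    using \<beta> bounds(1) unfolding \<alpha>_def by auto
  obtain C where "C > 0"
    "\<forall>r>0. \<forall>a b. a \<le> b \<longrightarrow> covered_by_cballs r (C * max 1 ((b - a) / r) powr \<alpha>) (E \<inter> {a..b})"
    using contracting_cover_covered_by_cballs[OF assms(1-4) \<alpha>(3,4) contraction_rate_less_one[OF assms(2-4) \<alpha>(1)]]
    by blast
  then have "hausdorff_measure \<beta> E = 0"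
    using \<alpha>(2) by (intro hausdorff_measure_eq_0_of_covered_by_cballs[OF assms(5)]) auto
  then show "hausdorff_dim E \<le> ereal \<beta>"
    unfolding hausdorff_dim_def using \<alpha> by (intro Inf_lower) auto
qed

section \<open>The exponent for arithmetic progressions\<close>

lemma minus_ln_one_minus_inverse_bounds:
  assumes "k \<ge> 3"
  shows "1 / real k \<le> - ln (1 - 1 / real k)" "- ln (1 - 1 / real k) \<le> 1"
proof -
  define u where "u = 1 / real k"
  have u: "0 < u" "u \<le> 1/3" using assms by (simp_all add: u_def field_simps)
  have "ln (1 - u) \<le> (1 - u) - 1"
    using u by (intro ln_le_minus_one) simp
  then show "1 / real k \<le> - ln (1 - 1 / real k)" by (simp add: u_def)
  have "u\<^sup>2 \<le> (1/3)\<^sup>2" using u by (intro power_mono) simp_all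
  moreover have "- u - 2 * u\<^sup>2 \<le> ln (1 - u)"
    using u by (intro ln_one_minus_pos_lower_bound) simp_all
  ultimately show "- ln (1 - 1 / real k) \<le> 1"
    using u unfolding u_def[symmetric] by (simp add: power2_eq_square)
qed

lemma ln_ceiling_inverse_bounds:
  fixes eps :: real
  assumes "0 < eps" "eps < 1/10"
  shows "1 < \<bar>ln eps\<bar>" "0 < ln (real_of_int \<lceil>1/eps\<rceil> + 1)"
    "ln (real_of_int \<lceil>1/eps\<rceil> + 1) \<le> 2 * \<bar>ln eps\<bar>"
proof -
  define x where "x = 1 / eps"
  have "x > 10" using assms unfolding x_def by (simp add: field_simps)
  have "\<bar>ln eps\<bar> = ln x"
    using assms unfolding x_def by (simp add: ln_div)
  moreover have "exp 1 < x" using e_less_272 \<open>x > 10\<close> by simp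
  then have "ln (exp 1) < ln x" using \<open>x > 10\<close> by (subst ln_less_cancel_iff) auto
  then have "1 < ln x" by simp
  ultimately show "1 < \<bar>ln eps\<bar>" by simp
  have "x \<le> real_of_int \<lceil>x\<rceil>" "real_of_int \<lceil>x\<rceil> < x + 1" by linarith+
  then have "1 < real_of_int \<lceil>x\<rceil> + 1" using \<open>x > 10\<close> by linarith
  then show "0 < ln (real_of_int \<lceil>1/eps\<rceil> + 1)" unfolding x_def by (rule ln_gt_zero)
  have "10 * x \<le> x * x"
    using \<open>x > 10\<close> by (intro mult_right_mono) auto
  then have "real_of_int \<lceil>x\<rceil> + 1 \<le> x * x"
    using \<open>real_of_int \<lceil>x\<rceil> < x + 1\<close> \<open>x > 10\<close> by linarith
  moreover have "0 < real_of_int \<lceil>x\<rceil> + 1"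
    using \<open>1 < real_of_int \<lceil>x\<rceil> + 1\<close> by linarith
  ultimately have "ln (real_of_int \<lceil>x\<rceil> + 1) \<le> ln (x * x)"
    by (rule ln_mono)
  also have "\<dots> = 2 * ln x" using \<open>x > 10\<close> by (simp add: ln_mult)
  finally show "ln (real_of_int \<lceil>1/eps\<rceil> + 1) \<le> 2 * \<bar>ln eps\<bar>"
    using \<open>\<bar>ln eps\<bar> = ln x\<close> unfolding x_def by simp
qed

lemma contraction_exponent_ceiling_eq:
  assumes "0 < eps"
  shows "contraction_exponent (nat \<lceil>1/eps\<rceil> + 1) \<theta>
           = ln (real_of_int \<lceil>1/eps\<rceil> + 1) / (ln (real_of_int \<lceil>1/eps\<rceil> + 1) - ln \<theta>)"
proof -
  have "real (nat \<lceil>1/eps\<rceil> + 1) = real_of_int \<lceil>1/eps\<rceil> + 1"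
    using assms by (simp add: ceiling_le_zero not_le)
  then show ?thesis
    unfolding contraction_exponent_def by (simp add: add.commute)
qed

lemma contraction_exponent_AP_le:
  assumes "k \<ge> 3" "0 < eps" "eps < 1/10"
  shows "contraction_exponent (nat \<lceil>1/eps\<rceil> + 1) (1 - 1 / real k) \<le> 1 - (1/4) / (real k * \<bar>ln eps\<bar>)"
proof -
  define l where "l = ln (real_of_int \<lceil>1/eps\<rceil> + 1)"
  define t where "t = - ln (1 - 1 / real k)"
  note t = minus_ln_one_minus_inverse_bounds[OF assms(1), folded t_def]
  note l = ln_ceiling_inverse_bounds[OF assms(2,3), folded l_def]
  have "real k \<ge> 3" using assms(1) by simp
  have "1 \<le> real k * t" using t(1) \<open>real k \<ge> 3\<close> by (simp add: field_simps)
  have "0 < t" using \<open>1 \<le> real k * t\<close> \<open>real k \<ge> 3\<close> by (smt (verit) mult_nonneg_nonpos)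
  have "4 * \<bar>ln eps\<bar> \<le> 4 * \<bar>ln eps\<bar> * (real k * t)"
    using mult_left_mono[OF \<open>1 \<le> real k * t\<close>, of "4 * \<bar>ln eps\<bar>"] l(1) by simp
  then have "l + t \<le> 4 * real k * \<bar>ln eps\<bar> * t"
    using t(2) l by (simp add: algebra_simps)
  then have "(1/4) / (real k * \<bar>ln eps\<bar>) \<le> t / (l + t)"
    using \<open>0 < t\<close> l \<open>real k \<ge> 3\<close> by (simp add: field_simps)
  moreover have "contraction_exponent (nat \<lceil>1/eps\<rceil> + 1) (1 - 1 / real k) = l / (l + t)"
    unfolding contraction_exponent_ceiling_eq[OF assms(2)] l_def t_def by simp
  moreover have "l / (l + t) = 1 - t / (l + t)"
    using \<open>0 < t\<close> l(2) by (simp add: field_simps)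
  ultimately show ?thesis by linarith
qed

theorem theorem1p1:
  shows "\<exists>c>0. \<forall>k::nat. \<forall>eps::real. k \<ge> 3 \<and> 0 < eps \<and> eps < 1/10 \<longrightarrow>
     (let m = real_of_int (ceiling (1/eps));
          A = ln (m + 1) / (ln (m + 1) - ln (1 - 1 / real k))
      in d_AP k eps \<le> ereal A
         \<and> A \<le> 1 - c / (real k * \<bar>ln eps\<bar>)
         \<and> (\<forall>E. bounded E \<and> avoids_AP k eps E \<longrightarrow> assouad_dim E \<le> ereal A))"
proof (intro exI[of _ "1/4"] conjI allI impI)
  fix k :: nat and eps :: real
  assume "k \<ge> 3 \<and> 0 < eps \<and> eps < 1/10"
  then have k: "k \<ge> 3" and eps: "0 < eps" "eps < 1/10" by auto
  define N where "N = nat \<lceil>1/eps\<rceil> + 1"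
  define \<theta> where "\<theta> = 1 - 1 / real k"
  have N\<theta>: "N \<ge> 1" "0 < \<theta>" "\<theta> < 1"
    using k unfolding N_def \<theta>_def by (auto simp: field_simps)
  have cover: "contracting_cover N \<theta> E" if "avoids_AP k eps E" for E
    using avoids_AP_contracting_cover[OF that] k eps(1) unfolding N_def \<theta>_def by simp
  have "d_AP k eps \<le> ereal (contraction_exponent N \<theta>)"
    unfolding d_AP_def
    by (rule SUP_least) (auto intro: hausdorff_dim_le_contraction_exponent[OF cover N\<theta>])
  moreover have "\<forall>E. bounded E \<and> avoids_AP k eps E \<longrightarrow> assouad_dim E \<le> ereal (contraction_exponent N \<theta>)"
    using assouad_dim_le_contraction_exponent[OF cover N\<theta>] by blast
  moreover have "contraction_exponent N \<theta> \<le> 1 - (1/4) / (real k * \<bar>ln eps\<bar>)"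
    unfolding N_def \<theta>_def by (rule contraction_exponent_AP_le[OF k eps])
  ultimately show "let m = real_of_int \<lceil>1/eps\<rceil>; A = ln (m + 1) / (ln (m + 1) - ln (1 - 1 / real k))
      in d_AP k eps \<le> ereal A \<and> A \<le> 1 - (1/4) / (real k * \<bar>ln eps\<bar>)
         \<and> (\<forall>E. bounded E \<and> avoids_AP k eps E \<longrightarrow> assouad_dim E \<le> ereal A)"
    unfolding Let_def N_def \<theta>_def contraction_exponent_ceiling_eq[OF eps(1)] by blast
qed (simp)

end
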